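(* Let $a=(a_i)_{i\in\mathbb Z}$ be any sequence of complex numbers and $\mu$ a Young diagram. Then $$s_{\mu;a}(x(\mu);y(\mu))=\prod_{(i,j)\in\mu}(a_{\mu_i-i+1}-a_{j-\mu'_j})=\prod_{(i,j)\in\mu}(a_{\mu_i-i+1}+\widehat a_{\mu'_j-j+1}),$$ the products being over the boxes $(i,j)$ (row $i$, column $j$) of $\mu$. If the numbers $a_i$, $i\in\mathbb Z$, are pairwise distinct, then $s_{\mu;a}(x(\mu);y(\mu))\ne0$ for all $\mu$.
   Context: $\Lambda$ is the algebra of symmetric functions over $\mathbb C$ with complete homogeneous $h_k$, elementary $e_k$, power sums $\mathbf p_k$. For a sequence $a$ define $h_{k;a}=\sum_{i=1}^k(-1)^{k-i}e_{k-i}(a_1,\dots,a_{k-1})h_i$ ($k\ge1$), $h_{0;a}=1$, $h_{k;a}=0$ ($k<0$); $(\tau^ra)_i=a_{i+r}$; $s_{\mu;a}=\det[h_{\mu_i-i+j;\,\tau^{1-j}a}]_{i,j=1}^N$ for any $N\ge\ell(\mu)$. Dual sequence: $\widehat a_i=-a_{1-i}$. $\mu'$ is the transposed diagram. Each $f\in\Lambda$ is evaluated at $(x;y)\in\mathbb C^d\times\mathbb C^d$ via $\mathbf p_k\mapsto\sum_ix_i^k+(-1)^{k-1}\sum_jy_j^k$. For a nonempty diagram $\lambda=(p_1,\dots,p_d\mid q_1,\dots,q_d)$ in Frobenius notation ($p_i=\lambda_i-i$, $q_i=\lambda'_i-i$, $d$ the number of diagonal boxes), $(x(\lambda);y(\lambda))=(a_{p_1+1},\dots,a_{p_d+1};\widehat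 a_{q_1+1},\dots,\widehat a_{q_d+1})$; and $(x(\varnothing);y(\varnothing))=(0;0)$. *)

theory Defs
  imports Complex_Main "Jordan_Normal_Form.Determinant"
begin

definition young :: "nat list \<Rightarrow> bool" where
  "young \<mu> \<longleftrightarrow> sorted (rev \<mu>) \<and> 0 \<notin> set \<mu>"

text \<open>Row lengths, 1-indexed: part mu i = mu_i (0 beyond the length).\<close>
definition part :: "nat list \<Rightarrow> nat \<Rightarrow> nat" where
  "part \<mu> i = (if 1 \<le> i \<and> i \<le> length \<mu> then \<mu> ! (i - 1) else 0)"

definition conjp :: "nat list \<Rightarrow> nat \<Rightarrow> nat" where
  "conjp \<mu> j = card {i. 1 \<le> i \<and> i \<le> length \<mu> \<and> j \<le> part \<mu> i}"

definition boxes :: "nat list \<Rightarrow> (nat \<times> nat) set" where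
  "boxes \<mu> = {(i, j). 1 \<le> i \<and> i \<le> length \<mu> \<and> 1 \<le> j \<and> j \<le> part \<mu> i}"

definition dnum :: "nat list \<Rightarrow> nat" where
  "dnum \<mu> = card {i. 1 \<le> i \<and> i \<le> length \<mu> \<and> i \<le> part \<mu> i}"

definition shift :: "int \<Rightarrow> (int \<Rightarrow> complex) \<Rightarrow> (int \<Rightarrow> complex)" where
  "shift r a = (\<lambda>i. a (i + r))"

definition dual :: "(int \<Rightarrow> complex) \<Rightarrow> (int \<Rightarrow> complex)" where
  "dual a = (\<lambda>i. - a (1 - i))"

definition esym :: "(int \<Rightarrow> complex) \<Rightarrow> nat \<Rightarrow> nat \<Rightarrow> complex" where
  "esym a m n = (\<Sum>S\<in>{S. S \<subseteq> {1..n} \<and> card S = m}. \<Prod>i\<in>S. a (int i))"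

text \<open>Value of h_k under the algebra homomorphism Lambda -> C determined by the values
  pv k of the power sums p_k, via Newton's identity k h_k = sum_{i=1}^k p_i h_{k-i}.\<close>
fun hval :: "(nat \<Rightarrow> complex) \<Rightarrow> nat \<Rightarrow> complex" where
  "hval pv 0 = 1"
| "hval pv (Suc k) = (\<Sum>i<Suc k. pv (Suc k - i) * hval pv i) / of_nat (Suc k)"

definition hka :: "(int \<Rightarrow> complex) \<Rightarrow> (nat \<Rightarrow> complex) \<Rightarrow> int \<Rightarrow> complex" where
  "hka a pv k = (if k < 0 then 0 else if k = 0 then 1 else
     (\<Sum>i\<in>{1..nat k}. (-1) ^ (nat k - i) * esym a (nat k - i) (nat k - 1) * hval pv i))"

text \<open>Value of s_{mu;a} = det[h_{mu_i-i+j; tau^{1-j} a}]_{i,j=1}^N with N = length mu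
  (homomorphisms commute with determinants).\<close>
definition sval :: "nat list \<Rightarrow> (int \<Rightarrow> complex) \<Rightarrow> (nat \<Rightarrow> complex) \<Rightarrow> complex" where
  "sval \<mu> a pv = (let N = length \<mu> in
     det (mat N N (\<lambda>(i, j). hka (shift (1 - int (j + 1)) a) pv
            (int (part \<mu> (i + 1)) - int (i + 1) + int (j + 1)))))"

text \<open>Power sums evaluated at (x;y), p_k -> sum x_i^k + (-1)^(k-1) sum y_j^k.\<close>
definition pval :: "(nat \<Rightarrow> complex) \<Rightarrow> (nat \<Rightarrow> complex) \<Rightarrow> nat \<Rightarrow> nat \<Rightarrow> complex" where
  "pval x y d k = (\<Sum>i\<in>{1..d}. x i ^ k) + (-1) ^ (k - 1) * (\<Sum>j\<in>{1..d}. y j ^ k)"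

text \<open>The point (x(mu); y(mu)) in Frobenius coordinates; for the empty diagram d = 0 and
  all power sums vanish, which agrees with the point (0;0).\<close>
definition xpt :: "(int \<Rightarrow> complex) \<Rightarrow> nat list \<Rightarrow> nat \<Rightarrow> complex" where
  "xpt a \<mu> i = a (int (part \<mu> i) - int i + 1)"

definition ypt :: "(int \<Rightarrow> complex) \<Rightarrow> nat list \<Rightarrow> nat \<Rightarrow> complex" where
  "ypt a \<mu> i = dual a (int (conjp \<mu> i) - int i + 1)"

definition pv_at :: "(int \<Rightarrow> complex) \<Rightarrow> nat list \<Rightarrow> nat \<Rightarrow> complex" where
  "pv_at a \<mu> = (if \<mu> = [] then (\<lambda>k. pval (\<lambda>_. 0) (\<lambda>_. 0) 1 k)
                 else pval (xpt a \<mu>) (ypt a \<mu>) (dnum \<mu>))"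

end

theory Submission
  imports Defs "HOL-Computational_Algebra.Formal_Power_Series"
begin

text \<open>
  Let N be the number of rows of \<mu> and d its number of diagonal boxes, and write
  \<lambda>_i = \<mu>_i - i + 1 and \<kappa>_j = j - \<mu>'_j. The box (i, j) lies in \<mu> iff \<kappa>_j < \<lambda>_i,
  and otherwise \<kappa>_j > \<lambda>_i; in particular the \<lambda>_i (i > d) and \<kappa>_j (j \<le> d) fill up
  {1 - N, ..., 0}, and \<lambda>_r (r > i) together with \<kappa>_j (j \<le> \<mu>_i) fill up {1 - N, ..., \<lambda>_i - 1}.
  At the point (x(\<mu>); y(\<mu>)) the generating function \<Sum> h_k t^k is therefore Q(t)/D(t) with
  Q = \<Prod>_{1-N \<le> m \<le> 0} (1 - a_m t) and D = \<Prod>_{r \<le> N} (1 - a_{\<lambda>_r} t), and the (i, j) entry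
  of the Jacobi-Trudi matrix becomes the t^{\<lambda>_i - 1 + j}-coefficient of A_i B_j / D, where
  A_i = \<Prod>_{1-N \<le> m < \<lambda>_i} (1 - a_m t) and B_j = \<Prod>_{2-j \<le> m \<le> 0} (1 - a_m t).
  Expanding the polynomial B_j of degree j - 1 in the basis t^{j-l} \<Prod>_{r < l} (1 - a_{\<lambda>_r} t),
  l \<le> j, is a unitriangular change of columns. In the new matrix, A_i cancels the factors with r > i
  of D, so entries above the diagonal vanish by a degree count, and the diagonal entry is the
  t^{\<mu>_i}-coefficient of \<Prod>_{j \<le> \<mu>_i} (1 - a_{\<kappa>_j} t) / (1 - a_{\<lambda>_i} t), which is
  \<Prod>_{j \<le> \<mu>_i} (a_{\<lambda>_i} - a_{\<kappa>_j}).
\<close>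

no_notation vec_index (infixl \<open>$\<close> 100)
notation fps_nth (infixl \<open>$\<close> 75)

section \<open>Row and column coordinates of a Young diagram\<close>

lemma part_antimono:
  assumes "young \<mu>" "1 \<le> r" "r \<le> s"
  shows "part \<mu> s \<le> part \<mu> r"
proof (cases "s \<le> length \<mu>")
  case True
  have "sorted (rev \<mu>)" using assms(1) unfolding young_def by simp
  then show ?thesis
    using sorted_rev_nth_mono[of \<mu> "r - 1" "s - 1"] True assms(2,3) unfolding part_def by auto
qed (simp add: part_def)

lemma part_pos:
  assumes "young \<mu>" "1 \<le> r" "r \<le> length \<mu>"
  shows "0 < part \<mu> r"
proof -
  have "\<mu> ! (r - 1) \<in> set \<mu>" using assms(2,3) by simp
  then show ?thesis using assms unfolding young_def part_def by (metis gr0I)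
qed

lemma part_eq_0_beyond_length: "length \<mu> < r \<Longrightarrow> part \<mu> r = 0"
  unfolding part_def by simp

lemma le_card_initial_segment_iff:
  fixes P :: "nat \<Rightarrow> bool"
  assumes down_closed: "\<And>i i'. P i \<Longrightarrow> 1 \<le> i' \<Longrightarrow> i' \<le> i \<Longrightarrow> P i'" and "1 \<le> r"
  shows "r \<le> card {i. 1 \<le> i \<and> i \<le> N \<and> P i} \<longleftrightarrow> r \<le> N \<and> P r"
proof -
  define S where "S = {i. 1 \<le> i \<and> i \<le> N \<and> P i}"
  have pos: "\<And>i. i \<in> S \<Longrightarrow> 1 \<le> i" and down: "\<And>i i'. i \<in> S \<Longrightarrow> 1 \<le> i' \<Longrightarrow> i' \<le> i \<Longrightarrow> i' \<in> S"
    using down_closed unfolding S_def by auto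
  have "S = {1..card S}"
  proof (cases "S = {}")
    case False
    have "finite S" unfolding S_def by (rule finite_subset[of _ "{..N}"]) auto
    then have max: "Max S \<in> S" "\<And>i. i \<in> S \<Longrightarrow> i \<le> Max S" using False by simp_all
    have "S = {1..Max S}"
    proof (intro equalityI subsetI)
      fix i assume "i \<in> S" then show "i \<in> {1..Max S}" using pos max(2) by simp
    next
      fix i assume "i \<in> {1..Max S}" then show "i \<in> S" using down[OF max(1)] by simp
    qed
    then show ?thesis by (metis card_atLeastAtMost diff_Suc_1)
  qed simp
  then have "r \<le> card S \<longleftrightarrow> r \<in> S" using \<open>1 \<le> r\<close> by (metis atLeastAtMost_iff)
  then show ?thesis using \<open>1 \<le> r\<close> unfolding S_def by simp
qed

lemma le_conjp_iff:
  assumes "young \<mu>" "1 \<le> j" "1 \<le> r"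
  shows "r \<le> conjp \<mu> j \<longleftrightarrow> j \<le> part \<mu> r"
proof -
  have "r \<le> conjp \<mu> j \<longleftrightarrow> r \<le> length \<mu> \<and> j \<le> part \<mu> r"
    unfolding conjp_def
  proof (rule le_card_initial_segment_iff)
    fix i i' assume "j \<le> part \<mu> i" "1 \<le> i'" "i' \<le> i"
    then show "j \<le> part \<mu> i'" using part_antimono[OF assms(1), of i' i] by simp
  qed (rule assms(3))
  then show ?thesis using part_eq_0_beyond_length[of \<mu> r] assms(2) by (cases "r \<le> length \<mu>") auto
qed

lemma le_dnum_iff:
  assumes "young \<mu>" "1 \<le> r"
  shows "r \<le> dnum \<mu> \<longleftrightarrow> r \<le> part \<mu> r"
proof -
  have "r \<le> dnum \<mu> \<longleftrightarrow> r \<le> length \<mu> \<and> r \<le> part \<mu> r"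
    unfolding dnum_def
  proof (rule le_card_initial_segment_iff)
    fix i i' assume "i \<le> part \<mu> i" "1 \<le> i'" "i' \<le> i"
    then show "i' \<le> part \<mu> i'" using part_antimono[OF assms(1), of i' i] by simp
  qed (rule assms(2))
  then show ?thesis using part_eq_0_beyond_length[of \<mu> r] assms(2) by (cases "r \<le> length \<mu>") auto
qed

lemma conjp_le_length: "conjp \<mu> j \<le> length \<mu>"
  unfolding conjp_def by (rule order_trans[OF card_mono[of "{1..length \<mu>}"]]) auto

lemma dnum_le_length: "dnum \<mu> \<le> length \<mu>"
  unfolding dnum_def by (rule order_trans[OF card_mono[of "{1..length \<mu>}"]]) auto

definition row_coord :: "nat list \<Rightarrow> nat \<Rightarrow> int" where
  "row_coord \<mu> i = int (part \<mu> i) - int i + 1"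

definition col_coord :: "nat list \<Rightarrow> nat \<Rightarrow> int" where
  "col_coord \<mu> j = int j - int (conjp \<mu> j)"

lemma row_coord_strict_antimono:
  assumes "young \<mu>" "1 \<le> r" "r < s"
  shows "row_coord \<mu> s < row_coord \<mu> r"
  using part_antimono[OF assms(1,2), of s] assms(3) unfolding row_coord_def by linarith

lemma col_coord_strict_mono:
  assumes "young \<mu>" "1 \<le> j" "j < j'"
  shows "col_coord \<mu> j < col_coord \<mu> j'"
proof -
  have "conjp \<mu> j' \<le> conjp \<mu> j"
  proof (cases "conjp \<mu> j' = 0")
    case False
    then have "j' \<le> part \<mu> (conjp \<mu> j')" using le_conjp_iff[OF assms(1), of j' "conjp \<mu> j'"] assms by simp
    then show ?thesis using le_conjp_iff[OF assms(1,2), of "conjp \<mu> j'"] False assms(3) by simp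
  qed simp
  then show ?thesis using assms(3) unfolding col_coord_def by linarith
qed

lemma inj_on_row_coord: "young \<mu> \<Longrightarrow> inj_on (row_coord \<mu>) {1..}"
  unfolding inj_on_def by (metis atLeast_iff row_coord_strict_antimono less_irrefl nat_neq_iff)

lemma inj_on_col_coord: "young \<mu> \<Longrightarrow> inj_on (col_coord \<mu>) {1..}"
  unfolding inj_on_def by (metis atLeast_iff col_coord_strict_mono less_irrefl nat_neq_iff)

lemma card_row_coord_image: "young \<mu> \<Longrightarrow> A \<subseteq> {1..} \<Longrightarrow> card (row_coord \<mu> ` A) = card A"
  by (metis card_image inj_on_row_coord inj_on_subset)

lemma card_col_coord_image: "young \<mu> \<Longrightarrow> B \<subseteq> {1..} \<Longrightarrow> card (col_coord \<mu> ` B) = card B"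
  by (metis card_image inj_on_col_coord inj_on_subset)

lemma row_coord_ne_col_coord:
  assumes "young \<mu>" "1 \<le> i" "1 \<le> j"
  shows "row_coord \<mu> i \<noteq> col_coord \<mu> j"
  using le_conjp_iff[OF assms(1,3,2)] unfolding row_coord_def col_coord_def by linarith

lemma row_coord_image_disjoint_col_coord_image:
  "young \<mu> \<Longrightarrow> A \<subseteq> {1..} \<Longrightarrow> B \<subseteq> {1..} \<Longrightarrow> row_coord \<mu> ` A \<inter> col_coord \<mu> ` B = {}"
  using row_coord_ne_col_coord by fastforce

lemma row_coord_lower_bound:
  assumes "young \<mu>" "1 \<le> i" "i \<le> length \<mu>"
  shows "2 - int (length \<mu>) \<le> row_coord \<mu> i"
  using part_pos[OF assms] assms(3) unfolding row_coord_def by linarith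

lemma col_coord_lower_bound: "1 \<le> j \<Longrightarrow> 1 - int (length \<mu>) \<le> col_coord \<mu> j"
  using conjp_le_length[of \<mu> j] unfolding col_coord_def by linarith

lemma eq_Un_if_card_le:
  assumes "finite I" "A \<union> B \<subseteq> I" "A \<inter> B = {}" "card I \<le> card A + card B"
  shows "I = A \<union> B"
proof -
  have "finite A" "finite B" using assms(1,2) finite_subset by blast+
  then have "card (A \<union> B) = card A + card B" using assms(3) by (rule card_Un_disjoint)
  then show ?thesis using card_subset_eq[OF assms(1,2)] card_mono[OF assms(1,2)] assms(4) by simp
qed

lemma interval_below_row_coord_partition:
  assumes "young \<mu>" "1 \<le> i" "i \<le> length \<mu>"
  shows "{1 - int (length \<mu>) .. row_coord \<mu> i - 1} =
           row_coord \<mu> ` {i+1..length \<mu>} \<union> col_coord \<mu> ` {1..part \<mu> i}"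
proof (rule eq_Un_if_card_le)
  show "row_coord \<mu> ` {i+1..length \<mu>} \<union> col_coord \<mu> ` {1..part \<mu> i}
          \<subseteq> {1 - int (length \<mu>) .. row_coord \<mu> i - 1}"
  proof (intro Un_least image_subsetI)
    fix r assume "r \<in> {i+1..length \<mu>}"
    then show "row_coord \<mu> r \<in> {1 - int (length \<mu>) .. row_coord \<mu> i - 1}"
      using row_coord_lower_bound[OF assms(1), of r] row_coord_strict_antimono[OF assms(1,2), of r] by auto
  next
    fix j assume "j \<in> {1..part \<mu> i}"
    then have "i \<le> conjp \<mu> j" using le_conjp_iff[OF assms(1), of j i] assms(2) by auto
    then show "col_coord \<mu> j \<in> {1 - int (length \<mu>) .. row_coord \<mu> i - 1}"
      using col_coord_lower_bound[of j \<mu>] \<open>j \<in> {1..part \<mu> i}\<close>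
      unfolding row_coord_def col_coord_def by auto
  qed
  show "row_coord \<mu> ` {i+1..length \<mu>} \<inter> col_coord \<mu> ` {1..part \<mu> i} = {}"
    by (rule row_coord_image_disjoint_col_coord_image[OF assms(1)]) auto
  show "card {1 - int (length \<mu>) .. row_coord \<mu> i - 1}
          \<le> card (row_coord \<mu> ` {i+1..length \<mu>}) + card (col_coord \<mu> ` {1..part \<mu> i})"
    using card_row_coord_image[OF assms(1), of "{i+1..length \<mu>}"]
      card_col_coord_image[OF assms(1), of "{1..part \<mu> i}"] assms(2,3)
    unfolding row_coord_def by auto
qed simp

lemma interval_frobenius_partition:
  assumes "young \<mu>"
  shows "{1 - int (length \<mu>) .. 0} =
           row_coord \<mu> ` {dnum \<mu>+1..length \<mu>} \<union> col_coord \<mu> ` {1..dnum \<mu>}"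
proof (rule eq_Un_if_card_le)
  show "row_coord \<mu> ` {dnum \<mu>+1..length \<mu>} \<union> col_coord \<mu> ` {1..dnum \<mu>} \<subseteq> {1 - int (length \<mu>) .. 0}"
  proof (intro Un_least image_subsetI)
    fix r assume r: "r \<in> {dnum \<mu>+1..length \<mu>}"
    then have "part \<mu> r < r" using le_dnum_iff[OF assms, of r] by auto
    then show "row_coord \<mu> r \<in> {1 - int (length \<mu>) .. 0}"
      using row_coord_lower_bound[OF assms, of r] r unfolding row_coord_def by auto
  next
    fix j assume j: "j \<in> {1..dnum \<mu>}"
    then have "j \<le> conjp \<mu> j" using le_dnum_iff[OF assms, of j] le_conjp_iff[OF assms, of j j] by auto
    then show "col_coord \<mu> j \<in> {1 - int (length \<mu>) .. 0}"
      using col_coord_lower_bound[of j \<mu>] j unfolding col_coord_def by auto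
  qed
  show "row_coord \<mu> ` {dnum \<mu>+1..length \<mu>} \<inter> col_coord \<mu> ` {1..dnum \<mu>} = {}"
    by (rule row_coord_image_disjoint_col_coord_image[OF assms]) auto
  show "card {1 - int (length \<mu>) .. 0}
          \<le> card (row_coord \<mu> ` {dnum \<mu>+1..length \<mu>}) + card (col_coord \<mu> ` {1..dnum \<mu>})"
    using card_row_coord_image[OF assms, of "{dnum \<mu>+1..length \<mu>}"]
      card_col_coord_image[OF assms, of "{1..dnum \<mu>}"] dnum_le_length[of \<mu>] by auto
qed simp

section \<open>Products of linear factors in formal power series\<close>

definition fps_factor :: "'a::comm_ring_1 \<Rightarrow> 'a fps" where
  "fps_factor c = 1 - fps_const c * fps_X"

definition fps_deg_le :: "'a::zero fps \<Rightarrow> nat \<Rightarrow> bool" where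
  "fps_deg_le F n \<longleftrightarrow> (\<forall>m>n. F $ m = 0)"

definition fps_icoeff :: "'a::zero fps \<Rightarrow> int \<Rightarrow> 'a" where
  "fps_icoeff F n = (if n < 0 then 0 else F $ nat n)"

lemma fps_factor_nth_0 [simp]: "fps_factor c $ 0 = 1"
  unfolding fps_factor_def by simp

lemma prod_fps_factor_nth_0 [simp]: "(\<Prod>i\<in>A. fps_factor (f i)) $ 0 = 1"
proof (cases "finite A")
  case True then show ?thesis by (induction A rule: finite_induct) simp_all
qed simp

lemma fps_factor_mult_nth_Suc: "(fps_factor c * F) $ Suc n = F $ Suc n - c * F $ n"
  unfolding fps_factor_def left_diff_distrib mult.assoc by (simp add: fps_X_mult_nth)

lemma fps_deg_le_mult:
  fixes F G :: "'a::comm_ring_1 fps"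
  assumes "fps_deg_le F n" "fps_deg_le G m"
  shows "fps_deg_le (F * G) (n + m)"
  unfolding fps_deg_le_def
proof (intro allI impI)
  fix k assume "n + m < k"
  then have "F $ i * G $ (k - i) = 0" for i
    using assms unfolding fps_deg_le_def by (cases "n < i") simp_all
  then show "(F * G) $ k = 0" by (simp add: fps_mult_nth)
qed

lemma fps_deg_le_prod_fps_factor:
  "finite A \<Longrightarrow> fps_deg_le (\<Prod>i\<in>A. fps_factor (f i)) (card A)"
proof (induction A rule: finite_induct)
  case empty then show ?case by (simp add: fps_deg_le_def)
next
  case (insert x A)
  have "fps_deg_le (fps_factor (f x)) 1" by (simp add: fps_deg_le_def fps_factor_def)
  from fps_deg_le_mult[OF this insert.IH] show ?case using insert.hyps by simp
qed

lemma fps_icoeff_X_power_mult: "fps_icoeff (fps_X ^ s * F) n = fps_icoeff F (n - int s)"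
  unfolding fps_icoeff_def by (auto simp: fps_X_power_mult_nth nat_diff_distrib)

lemma fps_icoeff_eq_0_if_deg_le: "fps_deg_le F m \<Longrightarrow> int m < n \<Longrightarrow> fps_icoeff F n = 0"
  unfolding fps_icoeff_def fps_deg_le_def by auto

lemma fps_icoeff_sum: "fps_icoeff (\<Sum>l\<in>A. F l) n = (\<Sum>l\<in>A. fps_icoeff (F l) n)"
  unfolding fps_icoeff_def by (simp add: fps_sum_nth)

lemma fps_icoeff_const_mult:
  fixes F :: "'a::comm_ring_1 fps"
  shows "fps_icoeff (fps_const c * F) n = c * fps_icoeff F n"
  unfolding fps_icoeff_def by simp

lemma fps_mult_inverse_mult_cancel:
  fixes X Y C :: "'a::field fps"
  assumes "C $ 0 \<noteq> 0"
  shows "X * C * inverse (Y * C) = X * inverse Y"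
proof -
  have "X * C * inverse (Y * C) = X * inverse Y * (C * inverse C)"
    by (simp add: fps_inverse_mult mult_ac)
  then show ?thesis using inverse_mult_eq_1'[OF assms] by simp
qed

lemma nth_Suc_mult_inverse_fps_factor:
  fixes x :: "'a::field"
  assumes "fps_deg_le F n"
  shows "(F * inverse (fps_factor x)) $ Suc n = x * (F * inverse (fps_factor x)) $ n"
proof -
  have "(fps_factor x * (F * inverse (fps_factor x))) $ Suc n = F $ Suc n"
    by (metis fps_factor_nth_0 inverse_mult_eq_1' mult.left_commute mult.right_neutral one_neq_zero)
  also have "\<dots> = 0" using assms unfolding fps_deg_le_def by simp
  finally show ?thesis unfolding fps_factor_mult_nth_Suc by simp
qed

lemma nth_prod_fps_factor_mult_inverse_fps_factor:
  fixes b :: "'b \<Rightarrow> 'a::field"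
  assumes "finite T"
  shows "((\<Prod>m\<in>T. fps_factor (b m)) * inverse (fps_factor x)) $ card T = (\<Prod>m\<in>T. x - b m)"
  using assms
proof (induction T rule: finite_induct)
  case empty then show ?case by simp
next
  case (insert m T)
  let ?G = "(\<Prod>m\<in>T. fps_factor (b m)) * inverse (fps_factor x)"
  have "((\<Prod>m\<in>insert m T. fps_factor (b m)) * inverse (fps_factor x)) $ card (insert m T)
        = (fps_factor (b m) * ?G) $ Suc (card T)"
    using insert.hyps by (simp add: mult.assoc)
  also have "\<dots> = (x - b m) * ?G $ card T"
    unfolding fps_factor_mult_nth_Suc
      nth_Suc_mult_inverse_fps_factor[OF fps_deg_le_prod_fps_factor[OF insert.hyps(1)]]
    by (simp add: algebra_simps)
  finally show ?case using insert by simp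
qed

lemma fps_expansion_in_prod_basis:
  fixes g :: "nat \<Rightarrow> 'a::comm_ring_1"
  assumes "1 \<le> n" "fps_deg_le F (n - 1)"
  shows "\<exists>c. F = (\<Sum>l=1..n. fps_const (c l) * fps_X ^ (n - l) * (\<Prod>r\<in>{1..<l}. fps_factor (g r)))
             \<and> c n = F $ 0"
  using assms
proof (induction n arbitrary: F rule: nat_induct_at_least)
  case base
  then have "F = fps_const (F $ 0)" by (intro fps_ext) (auto simp: fps_deg_le_def)
  then show ?case by (intro exI[of _ "\<lambda>_. F $ 0"]) simp
next
  case (Suc n)
  let ?G = "\<lambda>l. \<Prod>r\<in>{1..<l}. fps_factor (g r)"
  define F' where "F' = fps_shift 1 (F - fps_const (F $ 0) * ?G (Suc n))"
  have "fps_deg_le (?G (Suc n)) n" using fps_deg_le_prod_fps_factor[of "{1..<Suc n}" g] by simp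
  then have "fps_deg_le F' (n - 1)"
    using Suc.prems Suc.hyps unfolding F'_def fps_deg_le_def by auto
  then obtain c where c: "F' = (\<Sum>l=1..n. fps_const (c l) * fps_X ^ (n - l) * ?G l)"
    using Suc.IH by blast
  define c' where "c' = c(Suc n := F $ 0)"
  have "F = fps_X * F' + fps_const (F $ 0) * ?G (Suc n)"
    unfolding F'_def by (intro fps_ext) (simp add: fps_X_mult_nth)
  also have "fps_X * F' = (\<Sum>l=1..n. fps_const (c' l) * fps_X ^ (Suc n - l) * ?G l)"
    unfolding c sum_distrib_left c'_def
    by (intro sum.cong refl) (simp add: Suc_diff_le mult.assoc mult.left_commute)
  also have "fps_const (F $ 0) * ?G (Suc n) = fps_const (c' (Suc n)) * fps_X ^ (Suc n - Suc n) * ?G (Suc n)"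
    unfolding c'_def by simp
  finally have "F = (\<Sum>l=1..Suc n. fps_const (c' l) * fps_X ^ (Suc n - l) * ?G l)"
    by (simp add: sum.cl_ivl_Suc)
  moreover have "c' (Suc n) = F $ 0" unfolding c'_def by simp
  ultimately show ?case by blast
qed

definition fps_geom :: "'a::comm_ring_1 \<Rightarrow> 'a fps" where
  "fps_geom c = Abs_fps (\<lambda>k. if k = 0 then 0 else c ^ k)"

lemma fps_geom_mult_fps_factor: "fps_geom c * fps_factor c = fps_const c * fps_X"
proof (rule fps_ext)
  fix n show "(fps_geom c * fps_factor c) $ n = (fps_const c * fps_X) $ n"
    by (cases n) (simp_all add: fps_geom_def mult.commute[of _ "fps_factor c"] fps_factor_mult_nth_Suc)
qed

lemma fps_X_deriv_fps_factor: "fps_X * fps_deriv (fps_factor c) = - fps_geom c * fps_factor c"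
proof -
  have "fps_X * fps_deriv (fps_factor c) = - (fps_const c * fps_X)"
    unfolding fps_factor_def by (simp add: mult.commute fps_const_neg[symmetric] del: fps_const_neg)
  then show ?thesis by (simp only: mult_minus_left fps_geom_mult_fps_factor)
qed

lemma fps_X_deriv_prod_fps_factor:
  assumes "finite A"
  shows "fps_X * fps_deriv (\<Prod>i\<in>A. fps_factor (f i))
           = - (\<Sum>i\<in>A. fps_geom (f i)) * (\<Prod>i\<in>A. fps_factor (f i))"
  using assms
proof (induction A rule: finite_induct)
  case empty then show ?case by simp
next
  case (insert x A)
  let ?P = "\<Prod>i\<in>A. fps_factor (f i)"
  have "fps_X * fps_deriv (fps_factor (f x) * ?P)
          = (fps_X * fps_deriv (fps_factor (f x))) * ?P + fps_factor (f x) * (fps_X * fps_deriv ?P)"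
    by (simp add: algebra_simps)
  also have "\<dots> = - (fps_geom (f x) + (\<Sum>i\<in>A. fps_geom (f i))) * (fps_factor (f x) * ?P)"
    unfolding fps_X_deriv_fps_factor insert.IH by (simp add: algebra_simps)
  finally show ?case using insert.hyps by simp
qed

lemma fps_X_deriv_mult_inverse:
  fixes U V :: "'a::field fps"
  assumes "V $ 0 \<noteq> 0" "fps_X * fps_deriv U = SU * U" "fps_X * fps_deriv V = SV * V"
  shows "fps_X * fps_deriv (U * inverse V) = (SU - SV) * (U * inverse V)"
proof -
  define H where "H = U * inverse V"
  have HV: "H * V = U"
    unfolding H_def by (metis assms(1) inverse_mult_eq_1' mult.assoc mult.commute mult.right_neutral)
  have "(fps_X * fps_deriv H) * V = fps_X * fps_deriv (H * V) - H * (fps_X * fps_deriv V)"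
    by (simp add: algebra_simps)
  also have "\<dots> = SU * (H * V) - H * (SV * V)" unfolding HV assms(2,3) ..
  also have "\<dots> = ((SU - SV) * H) * V" by (simp add: algebra_simps)
  finally have "(fps_X * fps_deriv H) * V = ((SU - SV) * H) * V" .
  moreover have "V \<noteq> 0" using assms(1) by auto
  ultimately show ?thesis unfolding H_def[symmetric] by simp
qed

section \<open>The specialised complete symmetric functions\<close>

lemma hval_eq_nth_if_X_deriv:
  fixes H S :: "complex fps"
  assumes "H $ 0 = 1" "fps_X * fps_deriv H = S * H" "S $ 0 = 0" "\<And>k. 1 \<le> k \<Longrightarrow> S $ k = p k"
  shows "hval p n = H $ n"
proof (induction n rule: less_induct)
  case (less n)
  show ?case
  proof (cases n)
    case (Suc m)
    have "of_nat (Suc m) * H $ Suc m = (H * S) $ Suc m"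
      using arg_cong[OF assms(2), of "\<lambda>F. F $ Suc m"] by (simp add: mult.commute)
    also have "\<dots> = (\<Sum>i\<le>m. H $ i * S $ (Suc m - i))"
      by (simp add: fps_mult_nth sum.atLeast0_atMost_Suc atLeast0AtMost assms(3))
    also have "\<dots> = (\<Sum>i<Suc m. p (Suc m - i) * hval p i)"
      using Suc less.IH assms(4) by (intro sum.cong) (auto simp: lessThan_Suc_atMost)
    finally show ?thesis using Suc by (simp add: field_simps del: of_nat_Suc)
  qed (simp add: assms(1))
qed

lemma hval_pval_eq_nth:
  "hval (pval x y d) n
     = ((\<Prod>i\<in>{1..d}. fps_factor (- y i)) * inverse (\<Prod>i\<in>{1..d}. fps_factor (x i))) $ n"
proof -
  define U where "U = (\<Prod>i\<in>{1..d}. fps_factor (- y i))"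
  define V where "V = (\<Prod>i\<in>{1..d}. fps_factor (x i))"
  define S where "S = (\<Sum>i\<in>{1..d}. fps_geom (x i)) - (\<Sum>i\<in>{1..d}. fps_geom (- y i))"
  have "fps_X * fps_deriv (U * inverse V)
          = (- (\<Sum>i\<in>{1..d}. fps_geom (- y i)) - - (\<Sum>i\<in>{1..d}. fps_geom (x i))) * (U * inverse V)"
    unfolding U_def V_def
    by (intro fps_X_deriv_mult_inverse fps_X_deriv_prod_fps_factor) simp_all
  then have "fps_X * fps_deriv (U * inverse V) = S * (U * inverse V)"
    unfolding S_def by simp
  moreover have "S $ 0 = 0" unfolding S_def by (simp add: fps_sum_nth fps_geom_def)
  moreover have "S $ k = pval x y d k" if "1 \<le> k" for k
  proof -
    have "(-1::complex) ^ (k - 1) = - ((-1) ^ k)" using that by (cases k) simp_all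
    moreover have "S $ k = (\<Sum>i\<in>{1..d}. x i ^ k) - (\<Sum>i\<in>{1..d}. (- y i) ^ k)"
      unfolding S_def using that by (simp add: fps_sum_nth fps_geom_def)
    ultimately show ?thesis
      unfolding pval_def power_minus[of "y _"] sum_distrib_left[symmetric] by simp
  qed
  ultimately show ?thesis unfolding U_def[symmetric] V_def[symmetric]
    by (intro hval_eq_nth_if_X_deriv) (simp_all add: U_def V_def)
qed

lemma prod_fps_const_mult_X:
  "finite T \<Longrightarrow> (\<Prod>l\<in>T. fps_const (c l) * fps_X) = fps_const (\<Prod>l\<in>T. c l) * fps_X ^ card T"
proof (induction T rule: finite_induct)
  case (insert x T)
  have "fps_const (c x) * fps_X * (fps_const (\<Prod>l\<in>T. c l) * fps_X ^ card T)
      = (fps_const (c x) * fps_const (\<Prod>l\<in>T. c l)) * (fps_X * fps_X ^ card T)"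
    by (simp only: mult_ac)
  then show ?case using insert by simp
qed simp

lemma prod_fps_factor_nth_esym:
  "(\<Prod>l\<in>{1..n}. fps_factor (b (int l))) $ s = (-1) ^ s * esym b s n"
proof -
  have "(\<Prod>l\<in>{1..n}. fps_factor (b (int l)))
          = (\<Prod>l\<in>{1..n}. fps_const (- b (int l)) * fps_X + 1)"
    unfolding fps_factor_def by (simp add: fps_const_neg[symmetric] del: fps_const_neg)
  also have "\<dots> = (\<Sum>T\<in>Pow {1..n}. fps_const (\<Prod>l\<in>T. - b (int l)) * fps_X ^ card T)"
    unfolding prod_add[OF finite_atLeastAtMost]
  proof (intro sum.cong refl)
    fix T assume "T \<in> Pow {1..n}"
    then have "finite T" using finite_subset by blast
    then show "(\<Prod>l\<in>T. fps_const (- b (int l)) * fps_X) * (\<Prod>l\<in>{1..n} - T. 1)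
        = fps_const (\<Prod>l\<in>T. - b (int l)) * fps_X ^ card T"
      by (simp add: prod_fps_const_mult_X)
  qed
  finally have "(\<Prod>l\<in>{1..n}. fps_factor (b (int l))) $ s
      = (\<Sum>T\<in>Pow {1..n}. if card T = s then \<Prod>l\<in>T. - b (int l) else 0)"
    by (auto simp: fps_sum_nth intro!: sum.cong)
  also have "\<dots> = (\<Sum>T\<in>{T\<in>Pow {1..n}. card T = s}. \<Prod>l\<in>T. - b (int l))"
    by (rule sum.inter_filter[symmetric]) simp
  also have "\<dots> = (\<Sum>T\<in>{T\<in>Pow {1..n}. card T = s}. (-1) ^ s * (\<Prod>l\<in>T. b (int l)))"
    by (intro sum.cong refl) (auto simp: prod_uminus)
  also have "\<dots> = (-1) ^ s * (\<Sum>T\<in>{T\<in>Pow {1..n}. card T = s}. \<Prod>l\<in>T. b (int l))"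
    by (rule sum_distrib_left[symmetric])
  also have "{T\<in>Pow {1..n}. card T = s} = {S. S \<subseteq> {1..n} \<and> card S = s}" by auto
  finally show ?thesis unfolding esym_def .
qed

lemma esym_eq_0:
  assumes "n < m"
  shows "esym b m n = 0"
proof -
  have "card S \<noteq> m" if "S \<subseteq> {1..n}" for S
    using card_mono[OF finite_atLeastAtMost that] assms by simp
  then have no_subsets: "{S. S \<subseteq> {1..n} \<and> card S = m} = {}" by blast
  show ?thesis unfolding esym_def no_subsets by simp
qed

text \<open>Since e_k(b_1, ..., b_{k-1}) = 0, the alternating sum defining h_{k;b} is the
  t^k-coefficient of (1 - b_1 t) ... (1 - b_{k-1} t) \<Sum>_i h_i t^i.\<close>
lemma hka_eq_fps_icoeff:
  "hka b pv k = fps_icoeff ((\<Prod>l\<in>{1..nat k - 1}. fps_factor (b (int l))) * Abs_fps (hval pv)) k"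
proof (cases "k < 1")
  case True
  then show ?thesis by (cases "k = 0") (simp_all add: hka_def fps_icoeff_def)
next
  case False
  let ?P = "\<Prod>l\<in>{1..nat k - 1}. fps_factor (b (int l))"
  have "hka b pv k = (\<Sum>i=1..nat k. (-1) ^ (nat k - i) * esym b (nat k - i) (nat k - 1) * hval pv i)"
    using False by (simp add: hka_def)
  also have "\<dots> = (\<Sum>i=1..nat k. hval pv i * ?P $ (nat k - i))"
    unfolding prod_fps_factor_nth_esym by (rule sum.cong[OF refl mult.commute])
  also have "\<dots> = (\<Sum>i=0..nat k. hval pv i * ?P $ (nat k - i))"
  proof -
    have "?P $ nat k = 0"
      unfolding prod_fps_factor_nth_esym using esym_eq_0[of "nat k - 1" "nat k" b] False by simp
    then show ?thesis
      using sum.atLeast_Suc_atMost[of 0 "nat k" "\<lambda>i. hval pv i * ?P $ (nat k - i)"] by simp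
  qed
  also have "\<dots> = fps_icoeff (?P * Abs_fps (hval pv)) k"
    unfolding fps_icoeff_def mult.commute[of ?P] fps_mult_nth using False by simp
  finally show ?thesis .
qed

definition fps_factors :: "(int \<Rightarrow> 'a::comm_ring_1) \<Rightarrow> int set \<Rightarrow> 'a fps" where
  "fps_factors a S = (\<Prod>m\<in>S. fps_factor (a m))"

lemma fps_factors_nth_0 [simp]: "fps_factors a S $ 0 = 1"
  unfolding fps_factors_def by simp

lemma fps_factors_Un:
  "finite A \<Longrightarrow> finite B \<Longrightarrow> A \<inter> B = {} \<Longrightarrow> fps_factors a (A \<union> B) = fps_factors a A * fps_factors a B"
  unfolding fps_factors_def by (rule prod.union_disjoint)

lemma fps_factors_interval_split:
  assumes "u \<le> v" "v \<le> w + 1"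
  shows "fps_factors a {u..w} = fps_factors a {u..v - 1} * fps_factors a {v..w}"
proof -
  have "{u..w} = {u..v - 1} \<union> {v..w}" using assms by auto
  then show ?thesis by (simp add: fps_factors_Un)
qed

lemma fps_factors_image:
  "inj_on g A \<Longrightarrow> fps_factors a (g ` A) = (\<Prod>r\<in>A. fps_factor (a (g r)))"
  unfolding fps_factors_def by (simp add: prod.reindex)

lemma fps_factors_interval_swap:
  assumes "u \<le> v" "v \<le> x + 1" "v \<le> y + 1"
  shows "fps_factors a {v..x} * fps_factors a {u..y} = fps_factors a {u..x} * fps_factors a {v..y}"
  unfolding fps_factors_interval_split[OF assms(1,2), of a] fps_factors_interval_split[OF assms(1,3), of a]
  by (simp only: mult_ac)

lemma prod_fps_factor_shift:
  "(\<Prod>l\<in>{1..nat k - 1}. fps_factor (shift (1 - j) a (int l))) = fps_factors a {2 - j .. k - j}"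
  unfolding fps_factors_def
  by (rule prod.reindex_bij_witness[where i = "\<lambda>m. nat (m + j - 1)" and j = "\<lambda>l. int l + 1 - j"])
     (auto simp: shift_def algebra_simps)

section \<open>The Jacobi-Trudi determinant at the point (x(\<mu>); y(\<mu>))\<close>

locale diagram_specialization =
  fixes a :: "int \<Rightarrow> complex" and \<mu> :: "nat list"
  assumes young: "young \<mu>" and nonempty: "\<mu> \<noteq> []"
begin

abbreviation "N \<equiv> length \<mu>"
abbreviation "d \<equiv> dnum \<mu>"

definition "Q_fps = fps_factors a {1 - int N..0}"
definition "D_fps = (\<Prod>r\<in>{1..N}. fps_factor (a (row_coord \<mu> r)))"
definition "A_fps i = fps_factors a {1 - int N..row_coord \<mu> i - 1}"
definition "B_fps j = fps_factors a {2 - int j..0}"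
definition "G_fps l = (\<Prod>r\<in>{1..<l}. fps_factor (a (row_coord \<mu> r)))"

lemma fps_factors_row_coord_image:
  assumes "A \<subseteq> {1..}"
  shows "fps_factors a (row_coord \<mu> ` A) = (\<Prod>r\<in>A. fps_factor (a (row_coord \<mu> r)))"
  by (rule fps_factors_image[OF inj_on_subset[OF inj_on_row_coord[OF young] assms]])

lemma fps_factors_col_coord_image:
  assumes "B \<subseteq> {1..}"
  shows "fps_factors a (col_coord \<mu> ` B) = (\<Prod>j\<in>B. fps_factor (a (col_coord \<mu> j)))"
  by (rule fps_factors_image[OF inj_on_subset[OF inj_on_col_coord[OF young] assms]])

lemma h_generating_function: "Abs_fps (hval (pv_at a \<mu>)) = Q_fps * inverse D_fps"
proof -
  define U where "U = fps_factors a (col_coord \<mu> ` {1..d})"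
  define V where "V = (\<Prod>i\<in>{1..d}. fps_factor (a (row_coord \<mu> i)))"
  define R where "R = fps_factors a (row_coord \<mu> ` {d+1..N})"
  have "U = (\<Prod>i\<in>{1..d}. fps_factor (- ypt a \<mu> i))"
    unfolding U_def by (subst fps_factors_col_coord_image) (auto simp: ypt_def dual_def col_coord_def)
  moreover have "V = (\<Prod>i\<in>{1..d}. fps_factor (xpt a \<mu> i))"
    unfolding V_def xpt_def row_coord_def ..
  ultimately have "Abs_fps (hval (pv_at a \<mu>)) = U * inverse V"
    using nonempty by (intro fps_ext) (simp add: pv_at_def hval_pval_eq_nth)
  also have "\<dots> = (U * R) * inverse (V * R)"
    by (rule fps_mult_inverse_mult_cancel[symmetric]) (simp add: R_def)
  also have "U * R = Q_fps"
    unfolding Q_fps_def interval_frobenius_partition[OF young] U_def R_def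
    by (subst fps_factors_Un)
       (auto simp: mult.commute row_coord_image_disjoint_col_coord_image[OF young])
  also have "V * R = D_fps"
  proof -
    have "{1..N} = {1..d} \<union> {d+1..N}" using dnum_le_length[of \<mu>] by auto
    then show ?thesis unfolding D_fps_def V_def R_def
      by (simp add: fps_factors_row_coord_image prod.union_disjoint)
  qed
  finally show ?thesis .
qed

lemma entry_eq_fps_icoeff:
  assumes i: "1 \<le> i" "i \<le> N" and j: "1 \<le> j" "j \<le> N"
  shows "hka (shift (1 - int j) a) (pv_at a \<mu>) (row_coord \<mu> i - 1 + int j)
           = fps_icoeff (A_fps i * B_fps j * inverse D_fps) (row_coord \<mu> i - 1 + int j)"
proof -
  define k where "k = row_coord \<mu> i - 1 + int j"
  have "hka (shift (1 - int j) a) (pv_at a \<mu>) k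
          = fps_icoeff (fps_factors a {2 - int j..row_coord \<mu> i - 1} * Q_fps * inverse D_fps) k"
    unfolding hka_eq_fps_icoeff prod_fps_factor_shift h_generating_function k_def
    by (simp add: mult.assoc)
  also have "\<dots> = fps_icoeff (A_fps i * B_fps j * inverse D_fps) k"
  proof (cases "k < 1")
    case True
    then show ?thesis
      by (cases "k = 0") (simp_all add: fps_icoeff_def Q_fps_def A_fps_def B_fps_def D_fps_def)
  next
    case False
    then have "fps_factors a {2 - int j..row_coord \<mu> i - 1} * Q_fps = A_fps i * B_fps j"
      unfolding Q_fps_def A_fps_def B_fps_def k_def using j
      by (intro fps_factors_interval_swap) simp_all
    then show ?thesis by simp
  qed
  finally show ?thesis unfolding k_def .
qed

lemma B_fps_expansion:
  obtains c where "\<And>j. j \<in> {1..N} \<Longrightarrow> B_fps j = (\<Sum>l=1..j. fps_const (c j l) * fps_X ^ (j - l) * G_fps l)"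
    and "\<And>j. j \<in> {1..N} \<Longrightarrow> c j j = 1"
proof -
  have "\<exists>c. B_fps j = (\<Sum>l=1..j. fps_const (c l) * fps_X ^ (j - l) * G_fps l) \<and> c j = 1"
    if "j \<in> {1..N}" for j
  proof -
    have "fps_deg_le (B_fps j) (j - 1)"
      using fps_deg_le_prod_fps_factor[of "{2 - int j..0}" a] that
      unfolding B_fps_def fps_factors_def by (simp add: nat_diff_distrib')
    then show ?thesis
      using fps_expansion_in_prod_basis[of j "B_fps j" "\<lambda>r. a (row_coord \<mu> r)"] that
      unfolding G_fps_def B_fps_def by simp
  qed
  then show ?thesis using that by (metis (no_types) bchoice)
qed

definition "reduced_entry i l = fps_icoeff (A_fps i * G_fps l * inverse D_fps) (row_coord \<mu> i - 1 + int l)"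

lemma entry_eq_sum_reduced_entry:
  assumes "B_fps j = (\<Sum>l=1..j. fps_const (c l) * fps_X ^ (j - l) * G_fps l)"
  shows "fps_icoeff (A_fps i * B_fps j * inverse D_fps) (row_coord \<mu> i - 1 + int j)
           = (\<Sum>l=1..j. c l * reduced_entry i l)"
proof -
  have "A_fps i * B_fps j * inverse D_fps
          = (\<Sum>l=1..j. fps_const (c l) * (fps_X ^ (j - l) * (A_fps i * G_fps l * inverse D_fps)))"
    unfolding assms sum_distrib_left sum_distrib_right by (simp add: mult_ac)
  then have "fps_icoeff (A_fps i * B_fps j * inverse D_fps) (row_coord \<mu> i - 1 + int j)
      = (\<Sum>l=1..j. c l * fps_icoeff (A_fps i * G_fps l * inverse D_fps)
                                    (row_coord \<mu> i - 1 + int j - int (j - l)))"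
    by (simp only: fps_icoeff_sum fps_icoeff_const_mult fps_icoeff_X_power_mult)
  also have "\<dots> = (\<Sum>l=1..j. c l * reduced_entry i l)"
    unfolding reduced_entry_def by (rule sum.cong[OF refl]) (simp add: of_nat_diff algebra_simps)
  finally show ?thesis .
qed

lemma A_fps_factorization:
  assumes "1 \<le> i" "i \<le> N"
  shows "A_fps i = (\<Prod>r\<in>{i+1..N}. fps_factor (a (row_coord \<mu> r))) * fps_factors a (col_coord \<mu> ` {1..part \<mu> i})"
  unfolding A_fps_def interval_below_row_coord_partition[OF young assms]
  by (subst fps_factors_Un)
     (auto simp: fps_factors_row_coord_image row_coord_image_disjoint_col_coord_image[OF young])

lemma card_col_coord_interval: "card (col_coord \<mu> ` {1..m}) = m"
  using card_col_coord_image[OF young, of "{1..m}"] by auto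

lemma reduced_entry_above_diagonal:
  assumes "1 \<le> i" "i < l" "l \<le> N"
  shows "reduced_entry i l = 0"
proof -
  define K where "K = fps_factors a (col_coord \<mu> ` {1..part \<mu> i})"
  define P1 where "P1 = (\<Prod>r\<in>{1..i}. fps_factor (a (row_coord \<mu> r)))"
  define P2 where "P2 = (\<Prod>r\<in>{i+1..N}. fps_factor (a (row_coord \<mu> r)))"
  define Pm where "Pm = (\<Prod>r\<in>{i+1..<l}. fps_factor (a (row_coord \<mu> r)))"
  have split_D: "{1..N} = {1..i} \<union> {i+1..N}" and split_G: "{1..<l} = {1..i} \<union> {i+1..<l}"
    using assms by auto
  have "D_fps = P1 * P2"
    unfolding D_fps_def P1_def P2_def split_D by (rule prod.union_disjoint) auto
  moreover have "G_fps l = P1 * Pm"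
    unfolding G_fps_def P1_def Pm_def split_G by (rule prod.union_disjoint) auto
  moreover have "A_fps i = P2 * K" using A_fps_factorization assms unfolding P2_def K_def by simp
  ultimately have "A_fps i * G_fps l * inverse D_fps = (K * Pm) * (P1 * P2) * inverse (1 * (P1 * P2))"
    by (simp add: mult_ac)
  also have "\<dots> = K * Pm" by (subst fps_mult_inverse_mult_cancel) (simp_all add: P1_def P2_def)
  finally have "A_fps i * G_fps l * inverse D_fps = K * Pm" .
  moreover have "fps_deg_le K (part \<mu> i)"
    using fps_deg_le_prod_fps_factor[of "col_coord \<mu> ` {1..part \<mu> i}" a]
    unfolding K_def fps_factors_def card_col_coord_interval by simp
  moreover have "fps_deg_le Pm (l - Suc i)"
    using fps_deg_le_prod_fps_factor[of "{i+1..<l}" "\<lambda>r. a (row_coord \<mu> r)"] unfolding Pm_def by simp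
  ultimately have "fps_deg_le (A_fps i * G_fps l * inverse D_fps) (part \<mu> i + (l - Suc i))"
    by (simp add: fps_deg_le_mult)
  moreover have "int (part \<mu> i + (l - Suc i)) < row_coord \<mu> i - 1 + int l"
    unfolding of_nat_add of_nat_diff[OF Suc_leI[OF assms(2)]] row_coord_def by simp
  ultimately show ?thesis unfolding reduced_entry_def by (rule fps_icoeff_eq_0_if_deg_le)
qed

lemma reduced_entry_diagonal:
  assumes "1 \<le> i" "i \<le> N"
  shows "reduced_entry i i = (\<Prod>j\<in>{1..part \<mu> i}. a (row_coord \<mu> i) - a (col_coord \<mu> j))"
proof -
  define K where "K = fps_factors a (col_coord \<mu> ` {1..part \<mu> i})"
  define P1 where "P1 = (\<Prod>r\<in>{1..<i}. fps_factor (a (row_coord \<mu> r)))"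
  define P2 where "P2 = (\<Prod>r\<in>{i+1..N}. fps_factor (a (row_coord \<mu> r)))"
  have split_D: "{1..N} = insert i ({1..<i} \<union> {i+1..N})" using assms by auto
  have "D_fps = fps_factor (a (row_coord \<mu> i)) * (P1 * P2)"
    unfolding D_fps_def P1_def P2_def split_D
    by (subst prod.insert) (auto intro: prod.union_disjoint)
  moreover have "A_fps i = P2 * K" using A_fps_factorization assms unfolding P2_def K_def by simp
  ultimately have "A_fps i * G_fps i * inverse D_fps
      = K * (P1 * P2) * inverse (fps_factor (a (row_coord \<mu> i)) * (P1 * P2))"
    unfolding G_fps_def P1_def[symmetric] by (simp add: mult_ac)
  also have "\<dots> = K * inverse (fps_factor (a (row_coord \<mu> i)))"
    by (subst fps_mult_inverse_mult_cancel) (simp_all add: P1_def P2_def)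
  finally have "reduced_entry i i = (K * inverse (fps_factor (a (row_coord \<mu> i)))) $ part \<mu> i"
    unfolding reduced_entry_def using assms by (simp add: fps_icoeff_def row_coord_def)
  also have "\<dots> = (\<Prod>m\<in>col_coord \<mu> ` {1..part \<mu> i}. a (row_coord \<mu> i) - a m)"
    using nth_prod_fps_factor_mult_inverse_fps_factor[of "col_coord \<mu> ` {1..part \<mu> i}" a]
    unfolding K_def fps_factors_def card_col_coord_interval by simp
  also have "\<dots> = (\<Prod>j\<in>{1..part \<mu> i}. a (row_coord \<mu> i) - a (col_coord \<mu> j))"
    by (rule prod.reindex_cong[OF inj_on_subset[OF inj_on_col_coord[OF young]]]) auto
  finally show ?thesis .
qed

definition "reduced_matrix = mat N N (\<lambda>(i, l). reduced_entry (i + 1) (l + 1))"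

definition "expansion_matrix c = mat N N (\<lambda>(l, j). if l \<le> j then c (j + 1) (l + 1) else 0)"

lemma jacobi_trudi_matrix_eq_mult:
  assumes "\<And>j. j \<in> {1..N} \<Longrightarrow> B_fps j = (\<Sum>l=1..j. fps_const (c j l) * fps_X ^ (j - l) * G_fps l)"
  shows "mat N N (\<lambda>(i, j). hka (shift (1 - int (j + 1)) a) (pv_at a \<mu>)
                                 (int (part \<mu> (i + 1)) - int (i + 1) + int (j + 1)))
           = reduced_matrix * expansion_matrix c"
proof (rule eq_matI)
  fix i j assume "i < dim_row (reduced_matrix * expansion_matrix c)"
    "j < dim_col (reduced_matrix * expansion_matrix c)"
  then have ij: "i < N" "j < N" unfolding reduced_matrix_def expansion_matrix_def by auto
  have "hka (shift (1 - int (j + 1)) a) (pv_at a \<mu>) (int (part \<mu> (i + 1)) - int (i + 1) + int (j + 1))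
      = fps_icoeff (A_fps (i + 1) * B_fps (j + 1) * inverse D_fps) (row_coord \<mu> (i + 1) - 1 + int (j + 1))"
    using entry_eq_fps_icoeff[of "i + 1" "j + 1"] ij by (simp add: row_coord_def)
  also have "\<dots> = (\<Sum>l=1..j + 1. c (j + 1) l * reduced_entry (i + 1) l)"
    using ij by (intro entry_eq_sum_reduced_entry assms) simp
  also have "\<dots> = (\<Sum>l=0..j. c (j + 1) (l + 1) * reduced_entry (i + 1) (l + 1))"
    using sum.shift_bounds_cl_Suc_ivl[of "\<lambda>l. c (j + 1) l * reduced_entry (i + 1) l" 0 j] by simp
  also have "\<dots> = (\<Sum>l=0..<N. reduced_entry (i + 1) (l + 1) * (if l \<le> j then c (j + 1) (l + 1) else 0))"
  proof -
    have "{0..j} = {l \<in> {0..<N}. l \<le> j}" using ij by auto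
    then show ?thesis by (simp add: sum.inter_filter[symmetric] if_distrib mult.commute cong: if_cong)
  qed
  also have "\<dots> = (reduced_matrix * expansion_matrix c) $$ (i, j)"
    unfolding reduced_matrix_def expansion_matrix_def using ij by (simp add: scalar_prod_def)
  finally show "mat N N (\<lambda>(i, j). hka (shift (1 - int (j + 1)) a) (pv_at a \<mu>)
                     (int (part \<mu> (i + 1)) - int (i + 1) + int (j + 1))) $$ (i, j)
      = (reduced_matrix * expansion_matrix c) $$ (i, j)"
    using ij by simp
qed (simp_all add: reduced_matrix_def expansion_matrix_def)

lemma det_reduced_matrix: "det reduced_matrix = (\<Prod>i\<in>{1..N}. reduced_entry i i)"
proof -
  have "det reduced_matrix = prod_list (diag_mat reduced_matrix)"
    by (rule det_lower_triangular[of N])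
       (auto simp: reduced_matrix_def intro!: reduced_entry_above_diagonal)
  also have "\<dots> = (\<Prod>i<N. reduced_entry (i + 1) (i + 1))"
    unfolding prod_list_diag_prod reduced_matrix_def by (simp add: atLeast0LessThan)
  also have "\<dots> = (\<Prod>i\<in>{1..N}. reduced_entry i i)"
    by (rule prod.reindex_bij_witness[where i = "\<lambda>i. i - 1" and j = "\<lambda>i. i + 1"]) auto
  finally show ?thesis .
qed

lemma det_expansion_matrix:
  assumes "\<And>j. j \<in> {1..N} \<Longrightarrow> c j j = 1"
  shows "det (expansion_matrix c) = 1"
proof -
  have "det (expansion_matrix c) = prod_list (diag_mat (expansion_matrix c))"
    by (rule det_upper_triangular[of _ N]) (auto simp: expansion_matrix_def upper_triangular_def)
  then show ?thesis unfolding prod_list_diag_prod expansion_matrix_def using assms by simp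
qed

lemma sval_eq_prod_rows:
  "sval \<mu> a (pv_at a \<mu>) = (\<Prod>i\<in>{1..N}. \<Prod>j\<in>{1..part \<mu> i}. a (row_coord \<mu> i) - a (col_coord \<mu> j))"
proof -
  obtain c where expansion: "\<And>j. j \<in> {1..N} \<Longrightarrow> B_fps j = (\<Sum>l=1..j. fps_const (c j l) * fps_X ^ (j - l) * G_fps l)"
    and unit_diagonal: "\<And>j. j \<in> {1..N} \<Longrightarrow> c j j = 1"
    using B_fps_expansion by blast
  have "sval \<mu> a (pv_at a \<mu>) = det (reduced_matrix * expansion_matrix c)"
    using jacobi_trudi_matrix_eq_mult[OF expansion] by (simp add: sval_def)
  also have "\<dots> = det reduced_matrix * det (expansion_matrix c)"
    by (rule det_mult[of _ N]) (simp_all add: reduced_matrix_def expansion_matrix_def)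
  also have "det (expansion_matrix c) = 1"
    using unit_diagonal by (rule det_expansion_matrix)
  finally show ?thesis by (simp add: det_reduced_matrix reduced_entry_diagonal)
qed

end

lemma boxes_eq_Sigma: "boxes \<mu> = Sigma {1..length \<mu>} (\<lambda>i. {1..part \<mu> i})"
  unfolding boxes_def by auto

lemma sval_pv_at_eq_prod_boxes:
  assumes "young \<mu>"
  shows "sval \<mu> a (pv_at a \<mu>) = (\<Prod>(i, j)\<in>boxes \<mu>. a (row_coord \<mu> i) - a (col_coord \<mu> j))"
proof (cases "\<mu> = []")
  case True
  then show ?thesis by (simp add: sval_def boxes_eq_Sigma)
next
  case False
  then interpret diagram_specialization a \<mu> using assms by unfold_locales
  show ?thesis unfolding sval_eq_prod_rows boxes_eq_Sigma by (simp add: prod.Sigma)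
qed

lemma prod_boxes_ne_0:
  fixes a :: "int \<Rightarrow> 'a::idom"
  assumes "young \<mu>" "inj a"
  shows "(\<Prod>(i, j)\<in>boxes \<mu>. a (row_coord \<mu> i) - a (col_coord \<mu> j)) \<noteq> 0"
proof -
  have "a (row_coord \<mu> i) - a (col_coord \<mu> j) \<noteq> 0" if "(i, j) \<in> boxes \<mu>" for i j
  proof -
    have "row_coord \<mu> i \<noteq> col_coord \<mu> j"
      using that by (intro row_coord_ne_col_coord[OF assms(1)]) (simp_all add: boxes_def)
    then show ?thesis using inj_eq[OF assms(2)] by simp
  qed
  then have "\<forall>(i, j)\<in>boxes \<mu>. a (row_coord \<mu> i) - a (col_coord \<mu> j) \<noteq> 0" by blast
  moreover have "finite (boxes \<mu>)" unfolding boxes_eq_Sigma by simp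
  ultimately show ?thesis by (simp add: prod_zero_iff split_beta)
qed

theorem theorem11:
  fixes a :: "int \<Rightarrow> complex" and \<mu> :: "nat list"
  assumes "young \<mu>"
  shows "sval \<mu> a (pv_at a \<mu>) =
           (\<Prod>(i, j)\<in>boxes \<mu>. a (int (part \<mu> i) - int i + 1) - a (int j - int (conjp \<mu> j)))
       \<and> (\<Prod>(i, j)\<in>boxes \<mu>. a (int (part \<mu> i) - int i + 1) - a (int j - int (conjp \<mu> j))) =
           (\<Prod>(i, j)\<in>boxes \<mu>. a (int (part \<mu> i) - int i + 1) + dual a (int (conjp \<mu> j) - int j + 1))
       \<and> (inj a \<longrightarrow> sval \<mu> a (pv_at a \<mu>) \<noteq> 0)"
proof (intro conjI impI)
  show "sval \<mu> a (pv_at a \<mu>) =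
          (\<Prod>(i, j)\<in>boxes \<mu>. a (int (part \<mu> i) - int i + 1) - a (int j - int (conjp \<mu> j)))"
    using sval_pv_at_eq_prod_boxes[OF assms] unfolding row_coord_def col_coord_def .
  show "(\<Prod>(i, j)\<in>boxes \<mu>. a (int (part \<mu> i) - int i + 1) - a (int j - int (conjp \<mu> j))) =
          (\<Prod>(i, j)\<in>boxes \<mu>. a (int (part \<mu> i) - int i + 1) + dual a (int (conjp \<mu> j) - int j + 1))"
    unfolding dual_def by (intro prod.cong refl) (auto simp: algebra_simps)
  show "inj a \<Longrightarrow> sval \<mu> a (pv_at a \<mu>) \<noteq> 0"
    using sval_pv_at_eq_prod_boxes[OF assms] prod_boxes_ne_0[OF assms] by simp
qed

end
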